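(* There exist a polynomial $p$ and a constant $c>0$ such that for every integer $k\geq 1$ there exist an approval election $E=(N,C,(A_v)_{v\in N},k)$ with $|N|\le p(k)$ voters, a linear order $<$ on $C$, and a committee $W_0\subseteq C$ with $|W_0|=k$, such that running the local search algorithm $0^+$-ls-PAV with lexicographic better response (with respect to $<$) starting from $W_0$ performs at least $c\,k^{\log k}$ swaps (i.e., $\Omega(k^{\log k})$ swaps) before terminating.
   Context: An approval election is a tuple $E=(N,C,(A_v)_{v\in N},k)$ where $N=[n]$ is a set of voters, $C$ is a finite set of candidates, $A_v\subseteq C$ is the approval ballot of voter $v$, and $k$ is the target committee size. The PAV score of a committee $W\subseteq C$ is $\textsc{pavsc}(W)=\sum_{v\in N}\sum_{j=1}^{|A_v\cap W|}\frac{1}{j}$, and for $a\in W$, $b\notin W$, $\Delta(W,a,b)=\textsc{pavsc}((W\setminus\{a\})\cup\{b\})-\textsc{pavsc}(W)$. The algorithm $\varepsilon$-ls-PAV starts from a size-$k$ committee $W$ and, while there exist $a\in W$, $b\notin W$ with $\Delta(W,a,b)\ge\varepsilon$, replaces $W$ by $(W\cup\{b\})\setminus\{a\}$; it returns $W$ when no such pair exists. $0^+$-ls-PAV denotes $\varepsilon$-ls-PAV with $\varepsilon=1/\mathrm{lcm}(1,2,\dots,k)$, which is equivalent to performing a swap exactly when $\Delta(W,a,b)>0$. Lexicographic better response with respect to a linear order $<$ on $C$ selects the swap as follows: iterate over the candidates $b\in C\setminus W$ in increasing order of $<$, and for each such $b$ iterate over the candidates $a\in W$ in increasing order of $<$;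 perform the first swap $(a,b)$ encountered with $\Delta(W,a,b)>0$. Here $\log$ denotes the base-2 logarithm. *)

theory Defs
  imports Complex_Main "HOL-Computational_Algebra.Polynomial"
begin

definition approval_election :: "nat \<Rightarrow> nat set \<Rightarrow> (nat \<Rightarrow> nat set) \<Rightarrow> nat \<Rightarrow> bool" where
  "approval_election n C A k \<longleftrightarrow> finite C \<and> (\<forall>v\<in>{1..n}. A v \<subseteq> C)"

definition pavsc :: "nat \<Rightarrow> (nat \<Rightarrow> nat set) \<Rightarrow> nat set \<Rightarrow> real" where
  "pavsc n A W = (\<Sum>v\<in>{1..n}. \<Sum>j=1..card (A v \<inter> W). 1 / real j)"

definition pav_delta :: "nat \<Rightarrow> (nat \<Rightarrow> nat set) \<Rightarrow> nat set \<Rightarrow> nat \<Rightarrow> nat \<Rightarrow> real" where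
  "pav_delta n A W a b = pavsc n A (insert b (W - {a})) - pavsc n A W"

definition least_wrt :: "(nat \<times> nat) set \<Rightarrow> nat set \<Rightarrow> nat" where
  "least_wrt lt S = (THE x. x \<in> S \<and> (\<forall>y\<in>S. y \<noteq> x \<longrightarrow> (x, y) \<in> lt))"

text \<open>One step of 0^+-ls-PAV with lexicographic better response w.r.t. lt:
  None if no improving swap exists (termination), otherwise the new committee.
  b ranges over C - W in increasing order; for the first b admitting an improving
  a, a is the least improving member of W.\<close>
definition lex_step :: "(nat \<times> nat) set \<Rightarrow> nat set \<Rightarrow> nat \<Rightarrow> (nat \<Rightarrow> nat set) \<Rightarrow> nat set \<Rightarrow> nat set option" where
  "lex_step lt C n A W =
    (let Bs = {b \<in> C - W. \<exists>a\<in>W. pav_delta n A W a b > 0} in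
     if Bs = {} then None
     else (let b = least_wrt lt Bs;
               a = least_wrt lt {a \<in> W. pav_delta n A W a b > 0}
           in Some (insert b (W - {a}))))"

definition performs_at_least :: "(nat \<times> nat) set \<Rightarrow> nat set \<Rightarrow> nat \<Rightarrow> (nat \<Rightarrow> nat set) \<Rightarrow> nat set \<Rightarrow> nat \<Rightarrow> bool" where
  "performs_at_least lt C n A W0 m \<longleftrightarrow>
     (\<exists>Ws :: nat \<Rightarrow> nat set. Ws 0 = W0 \<and> (\<forall>i<m. lex_step lt C n A (Ws i) = Some (Ws (Suc i))))"

end

theory Submission
  imports Defs "HOL-Library.FuncSet" "HOL-Analysis.Harmonic_Numbers"
begin

(* Keep k - 1 frozen candidates in every committee and let the last seat walk along a chain
   of moving candidates c_0 < c_1 < ...  For q < k, a block of k voters approves the first q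
   frozen candidates, and its r-th voter also approves c_s iff r < d_s(q + 1).  The committee
   with c_s then has PAV score const + (\<Sum>j = 1..k. d_s(j) / j), so if the chain is sorted by
   these values, lexicographic better response moves from c_s to c_(s+1) at every step;
   k^2 + 1 singleton ballots per frozen candidate make swapping a frozen candidate out
   unprofitable.  With 0 \<le> d_s(j) \<le> j the sums take more than lcm(1, ..., k) values, as their
   fractional parts already hit every multiple of 1 / lcm(1, ..., k), and Nair's bound
   lcm(1, ..., k) \<ge> 2^k / (k + 1) exceeds k^(log k) / 2^128.  The run is thus even
   exponentially long, with k^2 + (k - 1)(k^2 + 1) \<le> k^3 + k voters. *)

section \<open>Nair's lower bound for lcm(1, ..., k)\<close>

lemma alternating_binomial_sum_Suc:
  fixes h :: "nat \<Rightarrow> real"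
  shows "(\<Sum>i\<le>Suc r. (-1)^i * real (Suc r choose i) * h i)
       = (\<Sum>i\<le>r. (-1)^i * real (r choose i) * h i) - (\<Sum>i\<le>r. (-1)^i * real (r choose i) * h (Suc i))"
proof -
  have "(\<Sum>i\<le>Suc r. (-1)^i * real (Suc r choose i) * h i)
      = h 0 + (\<Sum>i\<le>r. (-1)^Suc i * real (Suc r choose Suc i) * h (Suc i))"
    by (subst sum.atMost_Suc_shift) simp
  also have "\<dots> = h 0 + (\<Sum>i\<le>r. (-1)^Suc i * real (r choose Suc i) * h (Suc i))
                   - (\<Sum>i\<le>r. (-1)^i * real (r choose i) * h (Suc i))"
  proof -
    have "(-1)^Suc i * real (Suc r choose Suc i) * h (Suc i)
        = (-1)^Suc i * real (r choose Suc i) * h (Suc i) - (-1)^i * real (r choose i) * h (Suc i)" for i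
      by (simp add: algebra_simps)
    then show ?thesis
      by (simp add: sum_subtractf)
  qed
  also have "h 0 + (\<Sum>i\<le>r. (-1)^Suc i * real (r choose Suc i) * h (Suc i))
      = (\<Sum>i\<le>Suc r. (-1)^i * real (r choose i) * h i)"
    by (subst sum.atMost_Suc_shift) simp
  finally show ?thesis
    by simp
qed

(* The Beta integral of x^m (1 - x)^r, expanded binomially. *)
lemma alternating_binomial_reciprocal_sum:
  "(\<Sum>i\<le>r. (-1)^i * real (r choose i) / real (m + 1 + i)) = fact r * fact m / fact (m + r + 1)"
proof (induction r arbitrary: m)
  case 0
  then show ?case by (simp add: divide_simps)
next
  case (Suc r)
  have "(\<Sum>i\<le>Suc r. (-1)^i * real (Suc r choose i) / real (m + 1 + i))
      = fact r * fact m / fact (m + r + 1) - fact r * fact (Suc m) / fact (Suc (m + r + 1))"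
    using alternating_binomial_sum_Suc[of r "\<lambda>i. 1 / real (m + 1 + i)"] Suc.IH[of m] Suc.IH[of "Suc m"]
    by simp
  also have "fact (Suc (m + r + 1)) = real (m + r + 2) * (fact (m + r + 1) :: real)"
    by (simp only: fact_Suc) simp
  also have "fact r * fact m / fact (m + r + 1) - fact r * fact (Suc m) / (real (m + r + 2) * fact (m + r + 1))
      = fact (Suc r) * fact m / (real (m + r + 2) * fact (m + r + 1))"
  proof -
    have "x * y / F - x * (a * y) / (N * F) = ((N - a) * x) * y / (N * F)"
      if "N \<noteq> 0" "F \<noteq> 0" for x y F a N :: real
      using that by (simp add: field_simps)
    from this[where x = "fact r" and y = "fact m" and F = "fact (m + r + 1)" and a = "real (Suc m)" and N = "real (m + r + 2)"] show ?thesis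
      by (simp del: of_nat_add fact_Suc add: fact_Suc[of m] fact_Suc[of r])
  qed
  also have "real (m + r + 2) * fact (m + r + 1) = (fact (m + Suc r + 1) :: real)"
    by (simp only: add_Suc_right fact_Suc) simp
  finally show ?case .
qed

lemma Lcm_atLeastAtMost_pos: "Lcm {1..k} > (0::nat)"
proof -
  have "Lcm {1..k} \<noteq> (0::nat)"
    by (subst Lcm_0_iff) auto
  then show ?thesis
    by (simp only: neq0_conv)
qed

lemma Lcm_mult_alternating_binomial_reciprocal_sum_Ints:
  assumes "m + r + 1 \<le> k"
  shows "real (Lcm {1..k}) * (\<Sum>i\<le>r. (-1)^i * real (r choose i) / real (m + 1 + i)) \<in> \<int>"
proof -
  have "real (Lcm {1..k}) * (\<Sum>i\<le>r. (-1)^i * real (r choose i) / real (m + 1 + i))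
      = (\<Sum>i\<le>r. (-1)^i * real (r choose i) * real (Lcm {1..k} div (m + 1 + i)))"
    unfolding sum_distrib_left
  proof (rule sum.cong [OF refl])
    fix i assume "i \<in> {..r}"
    then have "m + 1 + i dvd Lcm {1..k}"
      using assms by (intro dvd_Lcm) auto
    then show "real (Lcm {1..k}) * ((-1)^i * real (r choose i) / real (m + 1 + i))
        = (-1)^i * real (r choose i) * real (Lcm {1..k} div (m + 1 + i))"
      by (simp add: real_of_nat_div)
  qed
  also have "\<dots> \<in> \<int>"
    by (intro Ints_sum Ints_mult) auto
  finally show ?thesis .
qed

lemma diff_mult_binomial_le_Lcm_atLeastAtMost:
  assumes "r < k"
  shows "(k - r) * (k choose r) \<le> Lcm {1..k}"
proof -
  define m where "m = k - r - 1"
  define L where "L = Lcm {1..k}"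
  have k: "k = m + r + 1" "k - r = Suc m"
    using assms by (simp_all add: m_def)
  have "fact k = (fact r * fact m) * (real (m + 1) * real (k choose r))"
  proof -
    have "fact k = fact r * fact (Suc m) * real (k choose r)"
      using binomial_fact_lemma[of r k] assms k(2) by (metis less_imp_le of_nat_fact of_nat_mult)
    then show ?thesis
      by (simp add: algebra_simps)
  qed
  then have "real L * (\<Sum>i\<le>r. (-1)^i * real (r choose i) / real (m + 1 + i))
      = real L / (real (m + 1) * real (k choose r))"
    unfolding alternating_binomial_reciprocal_sum k(1)[symmetric]
    by (simp add: nonzero_divide_mult_cancel_left)
  moreover have "real L * (\<Sum>i\<le>r. (-1)^i * real (r choose i) / real (m + 1 + i)) \<in> \<int>"
    unfolding L_def using k(1) by (intro Lcm_mult_alternating_binomial_reciprocal_sum_Ints) simp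
  ultimately have "real L / (real (m + 1) * real (k choose r)) \<in> \<int>"
    by simp
  moreover have pos: "real (m + 1) * real (k choose r) > 0"
    using assms by simp
  moreover have "L > 0"
    unfolding L_def by (rule Lcm_atLeastAtMost_pos)
  ultimately have "1 \<le> real L / (real (m + 1) * real (k choose r))"
    using Ints_nonzero_abs_ge1[of "real L / (real (m + 1) * real (k choose r))"] assms by simp
  then have "(m + 1) * (k choose r) \<le> L"
    using pos by (simp only: le_divide_eq_1_pos flip: of_nat_mult of_nat_le_iff)
  then show ?thesis
    unfolding L_def k(2) by simp
qed

lemma two_pow_le_Lcm_atLeastAtMost:
  assumes "k \<ge> 1"
  shows "2 ^ k \<le> (k + 1) * Lcm {1..k}"
proof -
  have "k choose (k div 2) \<le> (k - k div 2) * (k choose (k div 2))"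
    using assms by simp
  also have "\<dots> \<le> Lcm {1..k}"
    using assms by (intro diff_mult_binomial_le_Lcm_atLeastAtMost) auto
  finally have central: "k choose (k div 2) \<le> Lcm {1..k}" .
  have "(2::nat) ^ k = (\<Sum>i\<le>k. k choose i)"
    by (simp add: choose_row_sum)
  also have "\<dots> \<le> (\<Sum>i\<le>k. k choose (k div 2))"
    by (intro sum_mono binomial_maximum)
  also have "\<dots> = (k + 1) * (k choose (k div 2))"
    by simp
  also have "\<dots> \<le> (k + 1) * Lcm {1..k}"
    using central by (rule mult_left_mono) simp
  finally show ?thesis .
qed

section \<open>Growth of k^(log k)\<close>

lemma double_plus_four_le_two_pow: "t \<ge> 4 \<Longrightarrow> 2 * t + 4 \<le> (2::nat) ^ t"
proof (induction t rule: nat_induct_at_least)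
  case base then show ?case by simp
next
  case (Suc t) then show ?case by simp
qed

lemma square_plus_le_two_pow: "(t + 1)^2 + t + 2 \<le> (2::nat) ^ t + 128"
proof (cases "t \<ge> 7")
  case True
  have "(t + 1)^2 + t + 2 \<le> (2::nat) ^ t" using True
  proof (induction t rule: nat_induct_at_least)
    case base then show ?case by simp
  next
    case (Suc t)
    have "(Suc t + 1)^2 + Suc t + 2 = ((t + 1)^2 + t + 2) + (2 * t + 4)" by (simp add: power2_eq_square)
    also have "\<dots> \<le> 2 ^ t + 2 ^ t" using Suc double_plus_four_le_two_pow[of t] by simp
    finally show ?case by simp
  qed
  then show ?thesis by simp
next
  case False
  then have "t \<le> 6" by simp
  then have "(t + 1)^2 \<le> (7::nat)^2" by (intro power_mono) auto
  then show ?thesis using \<open>t \<le> 6\<close> by simp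
qed

lemma square_plus_le_two_powr:
  fixes x :: real
  assumes "x \<ge> 0"
  shows "x * x + x + 1 \<le> 2 powr x + 128"
proof -
  define t where "t = nat \<lfloor>x\<rfloor>"
  have t: "real t \<le> x" "x < real t + 1"
    unfolding t_def using assms by linarith+
  have "x * x \<le> (real t + 1) * (real t + 1)"
    using t assms by (intro mult_mono) auto
  moreover have "real ((t + 1)^2 + t + 2) = (real t + 1) * (real t + 1) + real t + 2"
    by (simp add: power2_eq_square algebra_simps)
  ultimately have "x * x + x + 1 \<le> real ((t + 1)^2 + t + 2)"
    using t by linarith
  also have "\<dots> \<le> real (2 ^ t + 128)"
    by (intro of_nat_mono square_plus_le_two_pow)
  also have "\<dots> = 2 powr real t + 128"
    by (simp add: powr_realpow)
  also have "\<dots> \<le> 2 powr x + 128"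
    using t by simp
  finally show ?thesis .
qed

lemma powr_log_le_Lcm_atLeastAtMost:
  assumes "k \<ge> 1"
  shows "real k powr log 2 (real k) \<le> 2 ^ 128 * real (Lcm {1..k})"
proof -
  define x where "x = log 2 (real k)"
  have "x \<ge> 0" "2 powr x = real k"
    unfolding x_def using assms by simp_all
  then have "x * x \<le> real k + 127 - x"
    using square_plus_le_two_powr[of x] by simp
  have "real k powr x = 2 powr (x * x)"
    unfolding \<open>2 powr x = real k\<close>[symmetric] powr_powr ..
  also have "\<dots> \<le> 2 powr (real k + 127 - x)"
    using \<open>x * x \<le> real k + 127 - x\<close> by simp
  also have "\<dots> = 2 ^ 127 * 2 ^ k / real k"
    by (simp add: powr_add powr_diff \<open>2 powr x = real k\<close> powr_realpow)
  also have "\<dots> \<le> 2 ^ 128 * 2 ^ k / real (k + 1)"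
    using assms by (simp add: field_simps)
  also have "real (2 ^ k) \<le> real ((k + 1) * Lcm {1..k})"
    using two_pow_le_Lcm_atLeastAtMost[OF assms] by (rule of_nat_mono)
  then have "2 ^ k \<le> real (k + 1) * real (Lcm {1..k})"
    by (simp only: of_nat_mult of_nat_power of_nat_numeral)
  then have "2 ^ 128 * 2 ^ k / real (k + 1) \<le> 2 ^ 128 * real (Lcm {1..k})"
    by (simp add: field_simps)
  finally show ?thesis
    unfolding x_def .
qed

section \<open>Sums of fractions with denominators 1, ..., k\<close>

definition frac_sum :: "nat \<Rightarrow> (nat \<Rightarrow> nat) \<Rightarrow> real" where
  "frac_sum k a = (\<Sum>j=1..k. real (a j) / real j)"

lemma frac_sum_Suc: "frac_sum (Suc k) a = frac_sum k a + real (a (Suc k)) / real (Suc k)"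
  by (simp add: frac_sum_def)

lemma frac_sum_cong: "(\<And>j. j \<in> {1..k} \<Longrightarrow> a j = b j) \<Longrightarrow> frac_sum k a = frac_sum k b"
  unfolding frac_sum_def by (intro sum.cong) auto

lemma frac_sum_conv_sum_lessThan: "frac_sum k a = (\<Sum>q<k. real (a (Suc q)) / real (Suc q))"
  by (induction k) (simp_all add: frac_sum_Suc, simp add: frac_sum_def)

lemma of_int_mod_minus_divide_Ints: "(of_int (x mod m) - of_int x) / of_int m \<in> (\<int> :: real set)"
proof (cases "m = 0")
  case False
  have "of_int (x mod m) - of_int x = - (of_int m * of_int (x div m) :: real)"
    by (simp add: minus_mod_eq_mult_div [symmetric] algebra_simps flip: of_int_mult)
  with False show ?thesis
    by simp
qed simp

lemma of_int_divide_lcm_eq: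
  fixes L K :: nat and u v r :: int
  assumes "L > 0" "K > 0" "u * int L + v * int K = int (gcd L K)"
  shows "of_int r / real (lcm L K) = of_int (r * v) / real L + of_int (r * u) / real K"
proof -
  have "gcd L K > 0"
    using assms(1) by simp
  then have "of_int r / real (lcm L K) = of_int r * real (gcd L K) / (real (gcd L K) * real (lcm L K))"
    by simp
  also have "real (gcd L K) * real (lcm L K) = real L * real K"
    by (metis of_nat_mult prod_gcd_lcm_nat)
  also have "real (gcd L K) = of_int u * real L + of_int v * real K"
    using arg_cong[OF assms(3), of real_of_int] by simp
  finally show ?thesis
    using assms(1,2) by (simp add: field_simps)
qed

lemma frac_sum_attains_residues:
  "\<exists>a \<in> PiE {1..k} (\<lambda>j. {..<j}). frac_sum k a - of_int r / real (Lcm {1..k}) \<in> \<int>"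
proof (induction k arbitrary: r)
  case 0
  show ?case
    by (rule bexI [of _ "\<lambda>_. undefined"]) (auto simp: frac_sum_def)
next
  case (Suc k)
  define L where "L = Lcm {1..k}"
  define K where "K = Suc k"
  have L': "Lcm {1..Suc k} = lcm L K"
    by (simp add: K_def L_def atLeastAtMostSuc_conv lcm.commute)
  obtain u v :: int where uv: "u * int L + v * int K = int (gcd L K)"
    using bezout_int[of "int L" "int K"] by (metis gcd_int_int_eq)
  have split: "of_int r / real (lcm L K) = of_int (r * v) / real L + of_int (r * u) / real K"
    using Lcm_atLeastAtMost_pos[of k] unfolding L_def[symmetric] by (rule of_int_divide_lcm_eq[OF _ _ uv]) (simp add: K_def)
  obtain a where a: "a \<in> PiE {1..k} (\<lambda>j. {..<j})"
    and a_res: "frac_sum k a - of_int (r * v) / real L \<in> \<int>"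
    using Suc.IH[of "r * v"] unfolding L_def by blast
  define c where "c = nat ((r * u) mod int K)"
  have "c < K"
    unfolding c_def K_def by (simp add: nat_less_iff)
  have c: "real c = of_int ((r * u) mod int K)"
    unfolding c_def K_def by simp
  define a' where "a' = a(Suc k := c)"
  have "a' \<in> PiE {1..Suc k} (\<lambda>j. {..<j})"
    using a \<open>c < K\<close> unfolding a'_def K_def by (auto simp: PiE_def extensional_def Pi_def)
  moreover have "frac_sum k a' = frac_sum k a"
    unfolding a'_def by (rule frac_sum_cong) simp
  then have "frac_sum (Suc k) a' = frac_sum k a + real c / real K"
    unfolding frac_sum_Suc K_def by (simp add: a'_def)
  then have eq: "frac_sum (Suc k) a' - of_int r / real (Lcm {1..Suc k})
      = (frac_sum k a - of_int (r * v) / real L) + (of_int ((r * u) mod int K) - of_int (r * u)) / of_int (int K)"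
    unfolding L' split c by (simp add: diff_divide_distrib)
  then have "frac_sum (Suc k) a' - of_int r / real (Lcm {1..Suc k}) \<in> \<int>"
    unfolding eq by (intro Ints_add a_res of_int_mod_minus_divide_Ints)
  ultimately show ?case
    by blast
qed

lemma frac_sum_less:
  assumes "k \<ge> 1" "a \<in> PiE {1..k} (\<lambda>j. {..<j})"
  shows "frac_sum k a < real k"
proof -
  have "frac_sum k a < (\<Sum>j=1..k. 1)"
    unfolding frac_sum_def using assms by (intro sum_strict_mono) (auto simp: PiE_iff)
  then show ?thesis
    by simp
qed

lemma inj_on_residue_representatives:
  fixes g :: "int \<Rightarrow> real"
  assumes "L > 0" "\<And>r. g r - of_int r / real L \<in> \<int>"
  shows "inj_on (\<lambda>r. g (int r)) {..<L}"
proof (rule inj_onI)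
  fix r r' assume r: "r \<in> {..<L}" "r' \<in> {..<L}" and "g (int r) = g (int r')"
  have "(g r' - of_int r' / real L) - (g r - of_int r / real L) \<in> \<int>"
    by (intro Ints_diff assms(2))
  also have "(g r' - of_int r' / real L) - (g r - of_int r / real L) = (real r - real r') / real L"
    using \<open>g (int r) = g (int r')\<close> by (simp add: diff_divide_distrib)
  finally have "(real r - real r') / real L \<in> \<int>" .
  moreover have "\<bar>(real r - real r') / real L\<bar> < 1"
    using r assms(1) by (simp add: abs_less_iff)
  ultimately have "(real r - real r') / real L = 0"
    by (rule Ints_nonzero_abs_less1)
  then show "r = r'"
    using assms(1) by simp
qed

lemma Lcm_less_card_frac_sums:
  assumes "k \<ge> 1"
  shows "Lcm {1..k} < card (frac_sum k ` PiE {1..k} (\<lambda>j. {..j}))"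
proof -
  define L where "L = Lcm {1..k}"
  have "L > 0"
    unfolding L_def by (rule Lcm_atLeastAtMost_pos)
  obtain res where res: "\<And>r. res r \<in> PiE {1..k} (\<lambda>j. {..<j})"
    "\<And>r. frac_sum k (res r) - of_int r / real L \<in> \<int>"
    using frac_sum_attains_residues unfolding L_def by metis
  define f where "f r = frac_sum k (res (int r))" for r
  have "inj_on f {..<L}"
    unfolding f_def using \<open>L > 0\<close> res(2) by (rule inj_on_residue_representatives)
  define a_max where "a_max = restrict (\<lambda>j. j) {1..k}"
  have "frac_sum k a_max = real k"
    unfolding frac_sum_def a_max_def by simp
  moreover have "\<forall>x \<in> f ` {..<L}. x < real k"
    unfolding f_def using frac_sum_less[OF assms res(1)] by blast
  ultimately have "frac_sum k a_max \<notin> f ` {..<L}"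
    by auto
  then have "card (insert (frac_sum k a_max) (f ` {..<L})) = L + 1"
    using \<open>inj_on f {..<L}\<close> by (simp add: card_image)
  moreover have "card (insert (frac_sum k a_max) (f ` {..<L})) \<le> card (frac_sum k ` PiE {1..k} (\<lambda>j. {..j}))"
  proof (rule card_mono)
    have "PiE {1..k} (\<lambda>j. {..<j}) \<subseteq> PiE {1..k} (\<lambda>j. {..j})"
      by (intro PiE_mono) auto
    moreover have "a_max \<in> PiE {1..k} (\<lambda>j. {..j})"
      unfolding a_max_def by auto
    ultimately show "insert (frac_sum k a_max) (f ` {..<L}) \<subseteq> frac_sum k ` PiE {1..k} (\<lambda>j. {..j})"
      using res(1) unfolding f_def by blast
  qed (intro finite_imageI finite_PiE; simp)
  ultimately have "L + 1 \<le> card (frac_sum k ` PiE {1..k} (\<lambda>j. {..j}))"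
    by simp
  then show ?thesis
    unfolding L_def by simp
qed

section \<open>Lexicographic better response along an improving chain\<close>

lemma least_wrt_less_eq_Min:
  assumes "finite S" "S \<noteq> {}"
  shows "least_wrt {(a, b). a < b} S = (Min S :: nat)"
  unfolding least_wrt_def
proof (rule the_equality)
  fix x assume x: "x \<in> S \<and> (\<forall>y\<in>S. y \<noteq> x \<longrightarrow> (x, y) \<in> {(a, b). a < b})"
  then have "x \<le> Min S"
    using assms by (auto intro: Min_in order.strict_implies_order)
  with x assms show "x = Min S"
    by (simp add: order_antisym)
qed (use assms in \<open>auto simp: order.not_eq_order_implies_strict\<close>)

locale improving_chain =
  fixes n :: nat and A :: "nat \<Rightarrow> nat set" and F :: "nat set" and c :: "nat \<Rightarrow> nat" and M :: nat
  assumes strict_mono_chain: "strict_mono c"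
    and chain_notin_frozen: "c s \<notin> F"
    and frozen: "t < M \<Longrightarrow> a \<in> F \<Longrightarrow> b \<notin> insert (c t) F \<Longrightarrow> pav_delta n A (insert (c t) F) a b \<le> 0"
    and improving: "s < t \<Longrightarrow> t < M \<Longrightarrow> pavsc n A (insert (c s) F) < pavsc n A (insert (c t) F)"
begin

lemma pav_delta_chain_swap:
  assumes "s \<noteq> t"
  shows "pav_delta n A (insert (c t) F) (c t) (c s) = pavsc n A (insert (c s) F) - pavsc n A (insert (c t) F)"
proof -
  have "insert (c s) (insert (c t) F - {c t}) = insert (c s) F"
    using chain_notin_frozen by auto
  then show ?thesis
    unfolding pav_delta_def by simp
qed

lemma chain_notin_committee: "s \<noteq> t \<Longrightarrow> c s \<notin> insert (c t) F"
  using chain_notin_frozen strict_mono_eq[OF strict_mono_chain] by auto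

lemma improving_entrants:
  assumes "t < M"
  shows "{b \<in> (F \<union> c ` {..<M}) - insert (c t) F. \<exists>a \<in> insert (c t) F. pav_delta n A (insert (c t) F) a b > 0}
       = c ` {t<..<M}"
proof (intro equalityI subsetI)
  fix b assume "b \<in> {b \<in> (F \<union> c ` {..<M}) - insert (c t) F. \<exists>a \<in> insert (c t) F. pav_delta n A (insert (c t) F) a b > 0}"
  then obtain a s where b: "b = c s" "s < M" "s \<noteq> t" and a: "a \<in> insert (c t) F" "pav_delta n A (insert (c t) F) a b > 0"
    by auto
  have "a = c t"
    using a b frozen[of t a b] assms chain_notin_committee by fastforce
  then have "\<not> pavsc n A (insert (c s) F) < pavsc n A (insert (c t) F)"
    using a b pav_delta_chain_swap[of s t] by simp
  then have "t < s"
    using improving[of s t] b assms by (cases "s < t") auto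
  then show "b \<in> c ` {t<..<M}"
    using b by auto
next
  fix b assume "b \<in> c ` {t<..<M}"
  then obtain s where s: "b = c s" "t < s" "s < M"
    by auto
  then have "pav_delta n A (insert (c t) F) (c t) b > 0"
    using pav_delta_chain_swap[of s t] improving[of t s] by simp
  then show "b \<in> {b \<in> (F \<union> c ` {..<M}) - insert (c t) F. \<exists>a \<in> insert (c t) F. pav_delta n A (insert (c t) F) a b > 0}"
    using s chain_notin_committee[of s t] by auto
qed

lemma improving_leavers:
  assumes "t < s" "s < M"
  shows "{a \<in> insert (c t) F. pav_delta n A (insert (c t) F) a (c s) > 0} = {c t}"
proof -
  have "a = c t" if "a \<in> insert (c t) F" "pav_delta n A (insert (c t) F) a (c s) > 0" for a
    using that frozen[of t a "c s"] assms chain_notin_committee[of s t] by fastforce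
  moreover have "pav_delta n A (insert (c t) F) (c t) (c s) > 0"
    using pav_delta_chain_swap[of s t] improving[of t s] assms by simp
  ultimately show ?thesis
    by auto
qed

lemma lex_step_chain:
  assumes "Suc t < M"
  shows "lex_step {(a, b). a < b} (F \<union> c ` {..<M}) n A (insert (c t) F) = Some (insert (c (Suc t)) F)"
proof -
  have "Min (c ` {t<..<M}) = c (Suc t)"
    using assms strict_mono_chain by (intro Min_eqI) (auto simp: strict_mono_less_eq)
  then have "least_wrt {(a, b). a < b} (c ` {t<..<M}) = c (Suc t)"
    using assms by (subst least_wrt_less_eq_Min) auto
  moreover have "least_wrt {(a, b). a < b} {c t} = c t"
    by (simp add: least_wrt_less_eq_Min)
  moreover have "insert (c (Suc t)) (insert (c t) F - {c t}) = insert (c (Suc t)) F"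
    using chain_notin_frozen by auto
  moreover have "c ` {t<..<M} \<noteq> {}"
    using assms by auto
  ultimately show ?thesis
    unfolding lex_step_def Let_def improving_entrants[OF Suc_lessD[OF assms]]
    using improving_leavers[of t "Suc t"] assms by simp
qed

lemma performs_at_least_chain:
  "performs_at_least {(a, b). a < b} (F \<union> c ` {..<M}) n A (insert (c 0) F) (M - 1)"
  unfolding performs_at_least_def
  by (intro exI[of _ "\<lambda>t. insert (c t) F"]) (auto intro: lex_step_chain)

end

section \<open>The election\<close>

lemma sum_list_map_concat: "(\<Sum>x\<leftarrow>concat xss. h x) = (\<Sum>xs\<leftarrow>xss. \<Sum>x\<leftarrow>xs. h x)"
  by (induction xss) auto

lemma sum_lessThan_indicator_less:
  assumes "a \<le> k"
  shows "(\<Sum>r<k. if r < a then x else 0) = real a * (x :: real)"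
proof -
  have "(\<Sum>r<k. if r < a then x else 0) = (\<Sum>r\<in>{..<k} \<inter> {..<a}. x)"
    by (subst sum.inter_restrict) auto
  also have "{..<k} \<inter> {..<a} = {..<a}"
    using assms by auto
  finally show ?thesis
    by simp
qed

definition profile_of_list :: "nat set list \<Rightarrow> nat \<Rightarrow> nat set" where
  "profile_of_list bs v = bs ! (v - 1)"

lemma pavsc_profile_of_list:
  "pavsc (length bs) (profile_of_list bs) W = (\<Sum>B\<leftarrow>bs. harm (card (B \<inter> W)))"
proof -
  have "pavsc (length bs) (profile_of_list bs) W = (\<Sum>v\<in>Suc ` {..<length bs}. harm (card (bs ! (v - 1) \<inter> W)))"
    by (simp add: pavsc_def profile_of_list_def harm_def inverse_eq_divide image_Suc_lessThan)
  also have "\<dots> = (\<Sum>i<length bs. harm (card (bs ! i \<inter> W)))"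
    by (simp add: sum.reindex)
  also have "\<dots> = (\<Sum>B\<leftarrow>bs. harm (card (B \<inter> W)))"
    by (simp add: sum_list_sum_nth atLeast0LessThan)
  finally show ?thesis .
qed

lemma pav_delta_profile_of_list:
  "pav_delta (length bs) (profile_of_list bs) W a b
     = (\<Sum>B\<leftarrow>bs. harm (card (B \<inter> insert b (W - {a}))) - harm (card (B \<inter> W)))"
  by (simp add: pav_delta_def pavsc_profile_of_list sum_list_subtractf)

lemma harm_card_swap_le:
  assumes "finite W"
  shows "harm (card (B \<inter> insert b (W - {a}))) \<le> harm (card (B \<inter> W)) + (1 :: real)"
proof -
  have "card (B \<inter> insert b (W - {a})) \<le> card (insert b (B \<inter> W))"
    using assms by (intro card_mono) auto
  also have "\<dots> \<le> Suc (card (B \<inter> W))"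
    using assms by (simp add: card_insert_if)
  finally have "harm (card (B \<inter> insert b (W - {a}))) \<le> (harm (Suc (card (B \<inter> W))) :: real)"
    by (rule harm_mono)
  also have "\<dots> \<le> harm (card (B \<inter> W)) + 1"
    by (simp add: harm_Suc inverse_le_1_iff)
  finally show ?thesis .
qed

(* The frozen candidates are 0, ..., k - 2 and the moving candidate c_s is k + s. *)
definition chain_ballots :: "nat \<Rightarrow> nat \<Rightarrow> (nat \<Rightarrow> nat \<Rightarrow> nat) \<Rightarrow> nat set list" where
  "chain_ballots k M d =
     [{..<q} \<union> {k + s |s. s < M \<and> r < d s (Suc q)}. q \<leftarrow> [0..<k], r \<leftarrow> [0..<k]] @
     concat (map (\<lambda>f. replicate (k * k + 1) {f}) [0..<k - 1])"

lemma length_chain_ballots: "length (chain_ballots k M d) = k * k + (k - 1) * (k * k + 1)"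
  by (simp add: chain_ballots_def length_concat sum_list_triv comp_def)

lemma length_chain_ballots_le: "length (chain_ballots k M d) \<le> k ^ 3 + k"
  unfolding length_chain_ballots by (cases k) (simp_all add: power3_eq_cube algebra_simps)

lemma sum_list_chain_ballots:
  fixes h :: "nat set \<Rightarrow> real"
  shows "(\<Sum>B\<leftarrow>chain_ballots k M d. h B)
     = (\<Sum>q<k. \<Sum>r<k. h ({..<q} \<union> {k + s |s. s < M \<and> r < d s (Suc q)}))
       + (\<Sum>f<k - 1. real (k * k + 1) * h {f})"
  by (simp add: chain_ballots_def sum_list_map_concat sum_list_replicate comp_def
      interv_sum_list_conv_sum_set_nat atLeast0LessThan) (simp add: algebra_simps)

lemma pavsc_chain_ballots:
  assumes "t < M" "\<forall>j\<in>{1..k}. d t j \<le> k"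
  shows "pavsc (length (chain_ballots k M d)) (profile_of_list (chain_ballots k M d)) (insert (k + t) {..<k - 1})
       = (\<Sum>q<k. real k * harm q) + real (k - 1) * real (k * k + 1) + frac_sum k (d t)"
proof -
  define W where "W = insert (k + t) {..<k - 1}"
  have value_ballot: "harm (card (({..<q} \<union> {k + s |s. s < M \<and> r < d s (Suc q)}) \<inter> W))
      = harm q + (if r < d t (Suc q) then 1 / real (Suc q) else 0)" if "q < k" for q r
  proof -
    have "({..<q} \<union> {k + s |s. s < M \<and> r < d s (Suc q)}) \<inter> W
        = {..<q} \<union> (if r < d t (Suc q) then {k + t} else {})"
      using that \<open>t < M\<close> unfolding W_def by auto
    then show ?thesis
      using that by (simp add: harm_Suc inverse_eq_divide)
  qed
  have value_row: "(\<Sum>r<k. if r < d t (Suc q) then 1 / real (Suc q) else 0) = real (d t (Suc q)) / real (Suc q)"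
    if "q < k" for q
    using that assms(2) by (simp add: sum_lessThan_indicator_less)
  have value_blocks: "(\<Sum>q<k. \<Sum>r<k. harm (card (({..<q} \<union> {k + s |s. s < M \<and> r < d s (Suc q)}) \<inter> W)))
      = (\<Sum>q<k. real k * harm q + real (d t (Suc q)) / real (Suc q))"
    by (intro sum.cong refl) (simp add: value_ballot value_row sum.distrib)
  have "{f} \<inter> W = {f}" if "f < k - 1" for f
    using that unfolding W_def by auto
  then have anchors: "(\<Sum>f<k - 1. real (k * k + 1) * harm (card ({f} \<inter> W))) = real (k - 1) * real (k * k + 1)"
    by (simp add: harm_expand)
  show ?thesis
    unfolding pavsc_profile_of_list sum_list_chain_ballots W_def[symmetric] value_blocks anchors
    by (simp add: sum.distrib frac_sum_conv_sum_lessThan)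
qed

lemma pav_delta_chain_ballots_frozen:
  assumes "finite W" "{..<k - 1} \<subseteq> W" "a < k - 1" "b \<notin> W"
  shows "pav_delta (length (chain_ballots k M d)) (profile_of_list (chain_ballots k M d)) W a b < 0"
proof -
  define \<Delta> where "\<Delta> B = harm (card (B \<inter> insert b (W - {a}))) - (harm (card (B \<inter> W)) :: real)" for B
  have "\<Delta> B \<le> 1" for B
    using harm_card_swap_le[OF assms(1)] unfolding \<Delta>_def by (simp add: algebra_simps)
  then have value_part: "(\<Sum>q<k. \<Sum>r<k. \<Delta> ({..<q} \<union> {k + s |s. s < M \<and> r < d s (Suc q)})) \<le> (\<Sum>q<k. \<Sum>r<k. 1)"
    by (intro sum_mono)
  have "\<Delta> {f} = (if f = a then -1 else 0)" if "f < k - 1" for f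
  proof -
    have "{f} \<inter> insert b (W - {a}) = (if f = a then {} else {f})" "{f} \<inter> W = {f}"
      using that assms by auto
    then show ?thesis
      unfolding \<Delta>_def by (simp add: harm_expand)
  qed
  then have "(\<Sum>f<k - 1. real (k * k + 1) * \<Delta> {f}) = (\<Sum>f<k - 1. if f = a then - real (k * k + 1) else 0)"
    by (intro sum.cong refl) simp
  also have "\<dots> = - real (k * k + 1)"
    using assms(3) by simp
  finally have anchor_part: "(\<Sum>f<k - 1. real (k * k + 1) * \<Delta> {f}) = - real (k * k + 1)" .
  show ?thesis
    unfolding pav_delta_profile_of_list sum_list_chain_ballots \<Delta>_def[symmetric] anchor_part
    using value_part by simp
qed

lemma approval_election_chain_ballots:
  "approval_election (length (chain_ballots k M d)) ({..<k - 1} \<union> (\<lambda>s. k + s) ` {..<M})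
     (profile_of_list (chain_ballots k M d)) k"
proof -
  have "B \<subseteq> {..<k - 1} \<union> (\<lambda>s. k + s) ` {..<M}" if "B \<in> set (chain_ballots k M d)" for B
    using that unfolding chain_ballots_def by auto
  moreover have "chain_ballots k M d ! (v - 1) \<in> set (chain_ballots k M d)"
    if "v \<in> {1..length (chain_ballots k M d)}" for v
    using that by (intro nth_mem) auto
  ultimately show ?thesis
    unfolding approval_election_def profile_of_list_def by auto
qed

lemma improving_chain_chain_ballots:
  assumes d_le: "\<And>s. s < M \<Longrightarrow> \<forall>j\<in>{1..k}. d s j \<le> k"
    and increasing: "\<And>s t. s < t \<Longrightarrow> t < M \<Longrightarrow> frac_sum k (d s) < frac_sum k (d t)"
  shows "improving_chain (length (chain_ballots k M d)) (profile_of_list (chain_ballots k M d))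
           {..<k - 1} (\<lambda>s. k + s) M"
proof
  show "strict_mono (\<lambda>s. k + s)"
    by (rule strict_monoI) simp
  show "pav_delta (length (chain_ballots k M d)) (profile_of_list (chain_ballots k M d))
      (insert (k + t) {..<k - 1}) a b \<le> 0"
    if "a \<in> {..<k - 1}" "b \<notin> insert (k + t) {..<k - 1}" for t a b
    by (rule less_imp_le, rule pav_delta_chain_ballots_frozen) (use that in auto)
  show "pavsc (length (chain_ballots k M d)) (profile_of_list (chain_ballots k M d)) (insert (k + s) {..<k - 1})
      < pavsc (length (chain_ballots k M d)) (profile_of_list (chain_ballots k M d)) (insert (k + t) {..<k - 1})"
    if "s < t" "t < M" for s t
  proof -
    have "s < M"
      using that by simp
    then show ?thesis
      unfolding pavsc_chain_ballots[where d = d, OF \<open>s < M\<close> d_le[OF \<open>s < M\<close>]]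
        pavsc_chain_ballots[where d = d, OF \<open>t < M\<close> d_le[OF \<open>t < M\<close>]]
      using increasing[OF that] by simp
  qed
qed simp

lemma chain_ballots_long_run:
  assumes "k \<ge> 1"
  obtains M d where "Lcm {1..k} < M"
    and "performs_at_least {(a, b). a < b} ({..<k - 1} \<union> (\<lambda>s. k + s) ` {..<M})
           (length (chain_ballots k M d)) (profile_of_list (chain_ballots k M d)) (insert k {..<k - 1}) (M - 1)"
proof -
  define D where "D = PiE {1..k} (\<lambda>j. {..j})"
  define vs where "vs = sorted_list_of_set (frac_sum k ` D)"
  define M where "M = length vs"
  define d where "d s = inv_into D (frac_sum k) (vs ! s)" for s
  have "finite (frac_sum k ` D)"
    unfolding D_def by (intro finite_imageI finite_PiE) auto
  then have vs: "set vs = frac_sum k ` D" "sorted_wrt (<) vs" "M = card (frac_sum k ` D)"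
    unfolding vs_def M_def by (simp_all add: strict_sorted_list_of_set)
  have d: "d s \<in> D" "frac_sum k (d s) = vs ! s" if "s < M" for s
  proof -
    have "vs ! s \<in> frac_sum k ` D"
      using that unfolding M_def vs(1)[symmetric] by (rule nth_mem)
    then show "d s \<in> D" "frac_sum k (d s) = vs ! s"
      unfolding d_def by (simp_all add: inv_into_into f_inv_into_f)
  qed
  have "improving_chain (length (chain_ballots k M d)) (profile_of_list (chain_ballots k M d))
      {..<k - 1} (\<lambda>s. k + s) M"
  proof (rule improving_chain_chain_ballots)
    show "\<forall>j\<in>{1..k}. d s j \<le> k" if "s < M" for s
      using d(1)[OF that] unfolding D_def PiE_iff by (meson atLeastAtMost_iff atMost_iff order_trans)
    show "frac_sum k (d s) < frac_sum k (d t)" if "s < t" "t < M" for s t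
      using vs(2) that unfolding d(2)[OF \<open>t < M\<close>] d(2)[OF less_trans[OF that]] M_def
      by (simp add: sorted_wrt_nth_less)
  qed
  moreover have "Lcm {1..k} < M"
    unfolding vs(3) D_def using assms by (rule Lcm_less_card_frac_sums)
  ultimately show ?thesis
    using that improving_chain.performs_at_least_chain by fastforce
qed

theorem theorem9:
  "\<exists>(p :: real poly) (c :: real). c > 0 \<and>
     (\<forall>k :: nat. k \<ge> 1 \<longrightarrow>
       (\<exists>(n :: nat) (C :: nat set) (A :: nat \<Rightarrow> nat set) (lt :: (nat \<times> nat) set) (W0 :: nat set) (m :: nat).
          approval_election n C A k \<and> real n \<le> poly p (real k) \<and>
          strict_linear_order_on C lt \<and>
          W0 \<subseteq> C \<and> card W0 = k \<and>
          performs_at_least lt C n A W0 m \<and>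
          real m \<ge> c * real k powr log 2 (real k)))"
proof (rule exI[of _ "[:0, 1, 0, 1:]"], rule exI[of _ "1 / 2 ^ 128"], intro conjI allI impI)
  fix k :: nat
  assume k: "k \<ge> 1"
  obtain M d where M: "Lcm {1..k} < M"
    and run: "performs_at_least {(a, b). a < b} ({..<k - 1} \<union> (\<lambda>s. k + s) ` {..<M})
           (length (chain_ballots k M d)) (profile_of_list (chain_ballots k M d)) (insert k {..<k - 1}) (M - 1)"
    using chain_ballots_long_run[OF k] .
  have "real (length (chain_ballots k M d)) \<le> real (k ^ 3 + k)"
    by (intro of_nat_mono length_chain_ballots_le)
  then have "real (length (chain_ballots k M d)) \<le> poly [:0, 1, 0, 1:] (real k)"
    by (simp add: power3_eq_cube algebra_simps)
  moreover have "strict_linear_order_on ({..<k - 1} \<union> (\<lambda>s. k + s) ` {..<M}) {(a, b). a < b}"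
    unfolding strict_linear_order_on_def trans_def irrefl_def total_on_def by auto
  moreover have "insert k {..<k - 1} \<subseteq> {..<k - 1} \<union> (\<lambda>s. k + s) ` {..<M}" "card (insert k {..<k - 1}) = k"
    using M k by auto
  moreover have "1 / 2 ^ 128 * real k powr log 2 (real k) \<le> real (M - 1)"
    using powr_log_le_Lcm_atLeastAtMost[OF k] M by simp
  ultimately show "\<exists>n C A lt W0 m. approval_election n C A k \<and> real n \<le> poly [:0, 1, 0, 1:] (real k) \<and>
      strict_linear_order_on C lt \<and> W0 \<subseteq> C \<and> card W0 = k \<and> performs_at_least lt C n A W0 m \<and>
      real m \<ge> 1 / 2 ^ 128 * real k powr log 2 (real k)"
    using approval_election_chain_ballots run by blast
qed simp

end
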